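(* Let $C_1, \ldots, C_m$ be the strongly connected components of the regulation graph $(A, \mathrm{reg})$, listed in a topological ordering of its strongly-connected-component quotient graph (i.e. whenever some agent of $C_i$ regulates some agent of $C_j$ with $i \neq j$, then $i < j$). Then $(C_1, \ldots, C_m)$ is a modular organisation.
   Context: Let $A$ be a finite set of agents. For each $a \in A$ let $S_a$ be a nonempty finite set, and let $S = \prod_{a \in A} S_a$ be the set of states; for $s \in S$ and $X \subseteq A$, $s|_X$ is the restriction of $s$ to $X$ (extended elementwise to sets). For each $a \in A$ let $\to_a \subseteq S \times S$ be a relation that is either empty or left-total, such that whenever $s \to_a s'$, either $s = s'$ or $s$ and $s'$ differ only in the $a$-component. For $X \subseteq A$ let $\to_X = \bigcup_{a \in X} \to_a$ (so $\to_\emptyset$ is empty) and $\to_X^*$ its reflexive-transitive closure; for $T \subseteq S$, $(T \to_X) = \{ t' : \exists t \in T,\ t \to_X t'\}$. Orbit operator: $\Omega_X(S') = \{ s' : \exists s \in S',\ s \to_X^* s'\}$. Equilibria operator: $\Psi_X(S') = \{ s \in \Omega_X(S') : \forall s' \in S,\ s \to_X^* s' \implies s' \to_X^* s \}$. $M$-relation: for $X, Y \subseteq A$, $X \leadsto Y$ iff for every $S' \subseteq S$, with $T = \Psi_X(\Psi_{X \cup Y}(S'))$, one has $(T \to_Y) \subseteq T$. Regulation: $a_k$ regulates $a_\ell$ (written $a_k \,\mathrm{reg}\, a_\ell$) iff there exist $s, s' \in S$ with $s|_{A \setminus \{a_k\}} = s'|_{A \setminus \{a_k\}}$ and $(\{s\}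 \to_{a_\ell})|_{\{a_\ell\}} \neq (\{s'\} \to_{a_\ell})|_{\{a_\ell\}}$; the regulation graph is the directed graph $(A, \mathrm{reg})$. A modular organisation is an ordered partition $(X_1, \ldots, X_m)$ of $A$ (a sequence of nonempty pairwise disjoint subsets with union $A$) such that for all $1 \le i \le m$, $\left(\bigcup_{j=1}^{i-1} X_j\right) \leadsto X_i$. *)

theory Defs
  imports Main "HOL-Library.FuncSet"
begin

text \<open>Agents have type 'a, local state values type 'v. A state is an element of
  the extensional product PiE A Sa. Trans a is the relation ->_a.\<close>

definition states :: "'a set \<Rightarrow> ('a \<Rightarrow> 'v set) \<Rightarrow> ('a \<Rightarrow> 'v) set" where
  "states A Sa = PiE A Sa"

definition network :: "'a set \<Rightarrow> ('a \<Rightarrow> 'v set) \<Rightarrow> ('a \<Rightarrow> ('a \<Rightarrow> 'v) rel) \<Rightarrow> bool" where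
  "network A Sa Trans \<longleftrightarrow>
     finite A \<and>
     (\<forall>a\<in>A. finite (Sa a) \<and> Sa a \<noteq> {}) \<and>
     (\<forall>a. Trans a \<subseteq> states A Sa \<times> states A Sa) \<and>
     (\<forall>a. a \<notin> A \<longrightarrow> Trans a = {}) \<and>
     (\<forall>a\<in>A. Trans a = {} \<or> (\<forall>s\<in>states A Sa. \<exists>s'. (s, s') \<in> Trans a)) \<and>
     (\<forall>a\<in>A. \<forall>s s'. (s, s') \<in> Trans a \<longrightarrow>
         s = s' \<or> (\<forall>b\<in>A. b \<noteq> a \<longrightarrow> s b = s' b))"

definition step :: "('a \<Rightarrow> ('a \<Rightarrow> 'v) rel) \<Rightarrow> 'a set \<Rightarrow> ('a \<Rightarrow> 'v) rel" where
  "step Trans X = (\<Union>a\<in>X. Trans a)"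

definition orbit :: "('a \<Rightarrow> ('a \<Rightarrow> 'v) rel) \<Rightarrow> 'a set \<Rightarrow> ('a \<Rightarrow> 'v) set \<Rightarrow> ('a \<Rightarrow> 'v) set" where
  "orbit Trans X S' = (step Trans X)\<^sup>* `` S'"

definition equilibria :: "'a set \<Rightarrow> ('a \<Rightarrow> 'v set) \<Rightarrow> ('a \<Rightarrow> ('a \<Rightarrow> 'v) rel) \<Rightarrow> 'a set
    \<Rightarrow> ('a \<Rightarrow> 'v) set \<Rightarrow> ('a \<Rightarrow> 'v) set" where
  "equilibria A Sa Trans X S' =
     {s \<in> orbit Trans X S'. \<forall>s'\<in>states A Sa.
        (s, s') \<in> (step Trans X)\<^sup>* \<longrightarrow> (s', s) \<in> (step Trans X)\<^sup>*}"

definition leadsto :: "'a set \<Rightarrow> ('a \<Rightarrow> 'v set) \<Rightarrow> ('a \<Rightarrow> ('a \<Rightarrow> 'v) rel) \<Rightarrow> 'a set \<Rightarrow> 'a set \<Rightarrow> bool" where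
  "leadsto A Sa Trans X Y \<longleftrightarrow>
     (\<forall>S' \<subseteq> states A Sa.
        let T = equilibria A Sa Trans X (equilibria A Sa Trans (X \<union> Y) S')
        in step Trans Y `` T \<subseteq> T)"

definition regulates :: "'a set \<Rightarrow> ('a \<Rightarrow> 'v set) \<Rightarrow> ('a \<Rightarrow> ('a \<Rightarrow> 'v) rel) \<Rightarrow> 'a \<Rightarrow> 'a \<Rightarrow> bool" where
  "regulates A Sa Trans k l \<longleftrightarrow>
     (\<exists>s\<in>states A Sa. \<exists>s'\<in>states A Sa.
        (\<forall>b\<in>A - {k}. s b = s' b) \<and>
        (\<lambda>t. t l) ` (Trans l `` {s}) \<noteq> (\<lambda>t. t l) ` (Trans l `` {s'}))"

definition reg_graph :: "'a set \<Rightarrow> ('a \<Rightarrow> 'v set) \<Rightarrow> ('a \<Rightarrow> ('a \<Rightarrow> 'v) rel) \<Rightarrow> 'a rel" where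
  "reg_graph A Sa Trans = {(k, l). k \<in> A \<and> l \<in> A \<and> regulates A Sa Trans k l}"

definition sccs :: "'a set \<Rightarrow> 'a rel \<Rightarrow> 'a set set" where
  "sccs V E = (\<lambda>a. {b \<in> V. (a, b) \<in> E\<^sup>* \<and> (b, a) \<in> E\<^sup>*}) ` V"

definition modular_organisation :: "'a set \<Rightarrow> ('a \<Rightarrow> 'v set) \<Rightarrow> ('a \<Rightarrow> ('a \<Rightarrow> 'v) rel)
    \<Rightarrow> 'a set list \<Rightarrow> bool" where
  "modular_organisation A Sa Trans Xs \<longleftrightarrow>
     (\<forall>i < length Xs. Xs ! i \<noteq> {}) \<and>
     (\<forall>i < length Xs. \<forall>j < length Xs. i \<noteq> j \<longrightarrow> Xs ! i \<inter> Xs ! j = {}) \<and>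
     \<Union>(set Xs) = A \<and>
     (\<forall>i < length Xs. leadsto A Sa Trans (\<Union>j<i. Xs ! j) (Xs ! i))"

end

theory Submission
  imports Defs
begin

text \<open>If no agent of Y regulates an agent of X, the X-dynamics cannot observe the
  Y-components: an X-path from a state u can be replayed from any state w that differs
  from u only at some y \<in> Y, and it ends in the original end state with its y-component
  replaced by that of w. Now let s be an X-equilibrium inside the (X \<union> Y)-equilibria and
  let s' arise from s by a y-step. Equilibria are closed under the dynamics, so s' is
  again an (X \<union> Y)-equilibrium. If s' reaches w under X, replaying this path from s
  reaches w with the y-component of s; as s is X-recurrent this leads back to s, and
  replaying that path from w (which has the y-component of s', since X-steps never change
  it) leads back to s'. Hence Y-steps preserve the nested equilibria, which is the relation
  X \<leadsto> Y. Components of the regulation graph listed in topological order have no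
  regulation pointing backwards, so every prefix leads to the next component.\<close>

lemma network_Trans_subset:
  "network A Sa Trans \<Longrightarrow> Trans a \<subseteq> states A Sa \<times> states A Sa"
  unfolding network_def by blast

lemma network_Trans_outside:
  "network A Sa Trans \<Longrightarrow> (s, s') \<in> Trans a \<Longrightarrow> a \<in> A"
  unfolding network_def by blast

lemma network_Trans_frame:
  "network A Sa Trans \<Longrightarrow> (s, s') \<in> Trans a \<Longrightarrow> b \<in> A \<Longrightarrow> b \<noteq> a \<Longrightarrow> s' b = s b"
  unfolding network_def by (metis empty_iff)

lemma states_eqI:
  "u \<in> states A Sa \<Longrightarrow> w \<in> states A Sa \<Longrightarrow> (\<And>b. b \<in> A \<Longrightarrow> u b = w b) \<Longrightarrow> u = w"
  unfolding states_def by (metis PiE_ext)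

lemma states_memD: "v \<in> states A Sa \<Longrightarrow> a \<in> A \<Longrightarrow> v a \<in> Sa a"
  unfolding states_def by auto

lemma fun_upd_in_states:
  "v \<in> states A Sa \<Longrightarrow> y \<in> A \<Longrightarrow> c \<in> Sa y \<Longrightarrow> v(y := c) \<in> states A Sa"
  unfolding states_def by (auto simp: PiE_iff extensional_def)

lemma step_mono: "X \<subseteq> Z \<Longrightarrow> step Trans X \<subseteq> step Trans Z"
  unfolding step_def by blast

lemma step_rtrancl_states:
  assumes "network A Sa Trans" "(u, v) \<in> (step Trans X)\<^sup>*" "u \<in> states A Sa"
  shows "v \<in> states A Sa"
  using assms(2,3) network_Trans_subset[OF assms(1)]
  by induction (auto simp: step_def)

lemma step_rtrancl_frame:
  assumes "network A Sa Trans" "(u, v) \<in> (step Trans X)\<^sup>*" "y \<in> A" "y \<notin> X"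
  shows "v y = u y"
  using assms(2)
proof induction
  case (step v v')
  then obtain x where "x \<in> X" "(v, v') \<in> Trans x" unfolding step_def by blast
  with assms(1,3,4) step.IH show ?case by (metis network_Trans_frame)
qed simp

lemma Trans_fun_upd_unregulated:
  assumes net: "network A Sa Trans"
    and tr: "(u, u') \<in> Trans x" and "y \<in> A" and "x \<noteq> y"
    and not_reg: "\<not> regulates A Sa Trans y x"
    and u: "u \<in> states A Sa" and w: "w \<in> states A Sa"
    and agree: "\<And>b. b \<in> A - {y} \<Longrightarrow> u b = w b"
  shows "(w, u'(y := w y)) \<in> Trans x"
proof -
  have "(\<lambda>t. t x) ` (Trans x `` {u}) = (\<lambda>t. t x) ` (Trans x `` {w})"
    using not_reg u w agree unfolding regulates_def by blast
  moreover have "u' x \<in> (\<lambda>t. t x) ` (Trans x `` {u})" using tr by blast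
  ultimately obtain t where wt: "(w, t) \<in> Trans x" and "t x = u' x" by auto
  have "t = u'(y := w y)"
  proof (rule states_eqI)
    show "t \<in> states A Sa" using wt network_Trans_subset[OF net] by blast
    have "u' \<in> states A Sa" using tr network_Trans_subset[OF net] by blast
    then show "u'(y := w y) \<in> states A Sa"
      using \<open>y \<in> A\<close> states_memD[OF w \<open>y \<in> A\<close>] by (rule fun_upd_in_states)
    fix b assume "b \<in> A"
    then show "t b = (u'(y := w y)) b"
      using \<open>t x = u' x\<close> \<open>x \<noteq> y\<close> agree network_Trans_frame[OF net wt]
        network_Trans_frame[OF net tr] by (cases "b = x") auto
  qed
  with wt show ?thesis by simp
qed

lemma step_rtrancl_fun_upd_unregulated:
  assumes net: "network A Sa Trans"
    and "y \<in> A" "y \<notin> X"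
    and not_reg: "\<forall>x\<in>X. \<not> regulates A Sa Trans y x"
    and path: "(u, v) \<in> (step Trans X)\<^sup>*"
    and u: "u \<in> states A Sa" and w: "w \<in> states A Sa"
    and agree: "\<And>b. b \<in> A - {y} \<Longrightarrow> u b = w b"
  shows "(w, v(y := w y)) \<in> (step Trans X)\<^sup>*"
  using path
proof induction
  case base
  have "u(y := w y) = w"
    by (intro states_eqI[OF fun_upd_in_states[OF u \<open>y \<in> A\<close> states_memD[OF w \<open>y \<in> A\<close>]] w])
      (use agree in auto)
  then show ?case by simp
next
  case (step v v')
  then obtain x where x: "x \<in> X" "(v, v') \<in> Trans x" unfolding step_def by blast
  have v: "v \<in> states A Sa" using step_rtrancl_states[OF net step.hyps(1) u] .
  have "(v(y := w y), v'(y := (v(y := w y)) y)) \<in> Trans x"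
    by (intro Trans_fun_upd_unregulated[OF net x(2) \<open>y \<in> A\<close> _ _ v])
      (use x \<open>y \<notin> X\<close> not_reg fun_upd_in_states[OF v \<open>y \<in> A\<close> states_memD[OF w \<open>y \<in> A\<close>]]
        in auto)
  then have "(v(y := w y), v'(y := w y)) \<in> step Trans X"
    using x unfolding step_def by auto
  with step.IH show ?case ..
qed

lemma equilibria_rtrancl_closed:
  assumes "s \<in> equilibria A Sa Trans X S'" "(s, t) \<in> (step Trans X)\<^sup>*"
  shows "t \<in> equilibria A Sa Trans X S'"
proof -
  have "s \<in> orbit Trans X S'"
    and "\<forall>w\<in>states A Sa. (s, w) \<in> (step Trans X)\<^sup>* \<longrightarrow> (w, s) \<in> (step Trans X)\<^sup>*"
    using assms(1) unfolding equilibria_def by auto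
  with assms(2) show ?thesis
    unfolding equilibria_def orbit_def by (auto intro: rtrancl_trans)
qed

lemma leadsto_if_unregulated:
  assumes net: "network A Sa Trans"
    and disjoint: "X \<inter> Y = {}"
    and not_reg: "\<forall>x\<in>X. \<forall>y\<in>Y. \<not> regulates A Sa Trans y x"
  shows "leadsto A Sa Trans X Y"
  unfolding leadsto_def Let_def
proof (intro allI impI subsetI)
  fix S' s'
  let ?E = "equilibria A Sa Trans (X \<union> Y) S'"
  let ?R = "step Trans X"
  assume "s' \<in> step Trans Y `` equilibria A Sa Trans X ?E"
  then obtain s y where s: "s \<in> equilibria A Sa Trans X ?E"
    and "y \<in> Y" and ss': "(s, s') \<in> Trans y"
    unfolding step_def by blast
  have "y \<in> A" "y \<notin> X" using network_Trans_outside[OF net ss'] disjoint \<open>y \<in> Y\<close> by auto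
  have s_st: "s \<in> states A Sa" and s'_st: "s' \<in> states A Sa"
    using ss' network_Trans_subset[OF net] by blast+
  have agree: "\<And>b. b \<in> A - {y} \<Longrightarrow> s' b = s b"
    using network_Trans_frame[OF net ss'] by auto
  have not_reg_y: "\<forall>x\<in>X. \<not> regulates A Sa Trans y x" using not_reg \<open>y \<in> Y\<close> by blast
  obtain e where e: "e \<in> ?E" and "(e, s) \<in> ?R\<^sup>*"
    using s unfolding equilibria_def orbit_def by blast
  then have "(e, s) \<in> (step Trans (X \<union> Y))\<^sup>*"
    using rtrancl_mono[OF step_mono[of X "X \<union> Y"]] by blast
  moreover have "(s, s') \<in> step Trans (X \<union> Y)"
    using ss' \<open>y \<in> Y\<close> unfolding step_def by blast
  ultimately have "s' \<in> ?E" using equilibria_rtrancl_closed[OF e] by (meson rtrancl_into_rtrancl)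
  then have "s' \<in> orbit Trans X ?E" unfolding orbit_def by blast
  moreover have "(w, s') \<in> ?R\<^sup>*" if w: "w \<in> states A Sa" and s'w: "(s', w) \<in> ?R\<^sup>*" for w
  proof -
    have w_s: "w(y := s y) \<in> states A Sa"
      using fun_upd_in_states[OF w \<open>y \<in> A\<close> states_memD[OF s_st \<open>y \<in> A\<close>]] .
    have "(s, w(y := s y)) \<in> ?R\<^sup>*"
      using step_rtrancl_fun_upd_unregulated[OF net \<open>y \<in> A\<close> \<open>y \<notin> X\<close> not_reg_y s'w
          s'_st s_st] agree by blast
    then have "(w(y := s y), s) \<in> ?R\<^sup>*"
      using s w_s unfolding equilibria_def by blast
    then have "(w, s(y := w y)) \<in> ?R\<^sup>*"
      using step_rtrancl_fun_upd_unregulated[OF net \<open>y \<in> A\<close> \<open>y \<notin> X\<close> not_reg_y _ w_s w]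
      by simp
    moreover have "s(y := w y) = s'"
      using step_rtrancl_frame[OF net s'w \<open>y \<in> A\<close> \<open>y \<notin> X\<close>] agree
      by (intro states_eqI[OF fun_upd_in_states[OF s_st \<open>y \<in> A\<close> states_memD[OF w \<open>y \<in> A\<close>]]
            s'_st]) auto
    ultimately show ?thesis by simp
  qed
  ultimately show "s' \<in> equilibria A Sa Trans X ?E"
    unfolding equilibria_def by blast
qed

lemma modular_organisation_if_no_backward_regulation:
  assumes net: "network A Sa Trans"
    and nonempty: "\<forall>i < length Xs. Xs ! i \<noteq> {}"
    and disjoint: "\<forall>i < length Xs. \<forall>j < length Xs. i \<noteq> j \<longrightarrow> Xs ! i \<inter> Xs ! j = {}"
    and cover: "\<Union>(set Xs) = A"
    and forward: "\<forall>i < length Xs. \<forall>j < i. \<forall>a \<in> Xs ! i. \<forall>b \<in> Xs ! j.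
                    \<not> regulates A Sa Trans a b"
  shows "modular_organisation A Sa Trans Xs"
  unfolding modular_organisation_def
proof (intro conjI allI impI nonempty[rule_format] disjoint[rule_format] cover)
  fix i assume i: "i < length Xs"
  show "leadsto A Sa Trans (\<Union>j<i. Xs ! j) (Xs ! i)"
  proof (rule leadsto_if_unregulated[OF net])
    have "Xs ! j \<inter> Xs ! i = {}" if "j < i" for j
      using disjoint i that by simp
    then show "(\<Union>j<i. Xs ! j) \<inter> Xs ! i = {}" by blast
    show "\<forall>x\<in>\<Union>j<i. Xs ! j. \<forall>y\<in>Xs ! i. \<not> regulates A Sa Trans y x"
      using forward i by blast
  qed
qed

lemma sccs_nonempty: "C \<in> sccs V E \<Longrightarrow> C \<noteq> {}"
  unfolding sccs_def by auto

lemma Union_sccs: "\<Union>(sccs V E) = V"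
  unfolding sccs_def by auto

lemma sccs_disjoint:
  assumes "C \<in> sccs V E" "D \<in> sccs V E" "C \<noteq> D"
  shows "C \<inter> D = {}"
proof (rule ccontr)
  obtain a d where a: "C = {b \<in> V. (a, b) \<in> E\<^sup>* \<and> (b, a) \<in> E\<^sup>*}"
    and d: "D = {b \<in> V. (d, b) \<in> E\<^sup>* \<and> (b, d) \<in> E\<^sup>*}"
    using assms(1,2) unfolding sccs_def by auto
  assume "C \<inter> D \<noteq> {}"
  then have "(a, d) \<in> E\<^sup>*" "(d, a) \<in> E\<^sup>*"
    unfolding a d by (auto intro: rtrancl_trans)
  then have "C = D" unfolding a d by (blast intro: rtrancl_trans)
  with assms(3) show False ..
qed

theorem theorem1:
  fixes A :: "'a set" and Sa :: "'a \<Rightarrow> 'v set" and Trans :: "'a \<Rightarrow> ('a \<Rightarrow> 'v) rel"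
    and Cs :: "'a set list"
  assumes "network A Sa Trans"
    and "distinct Cs"
    and "set Cs = sccs A (reg_graph A Sa Trans)"
    and "\<forall>i < length Cs. \<forall>j < length Cs. i \<noteq> j \<longrightarrow>
           (\<exists>a\<in>Cs ! i. \<exists>b\<in>Cs ! j. regulates A Sa Trans a b) \<longrightarrow> i < j"
  shows "modular_organisation A Sa Trans Cs"
proof (rule modular_organisation_if_no_backward_regulation[OF assms(1)])
  have scc: "i < length Cs \<Longrightarrow> Cs ! i \<in> sccs A (reg_graph A Sa Trans)" for i
    using assms(3) nth_mem by blast
  show "\<forall>i < length Cs. Cs ! i \<noteq> {}"
    using scc sccs_nonempty by blast
  show "\<forall>i < length Cs. \<forall>j < length Cs. i \<noteq> j \<longrightarrow> Cs ! i \<inter> Cs ! j = {}"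
  proof (intro allI impI)
    fix i j assume "i < length Cs" "j < length Cs" "i \<noteq> j"
    moreover from this have "Cs ! i \<noteq> Cs ! j"
      using assms(2) nth_eq_iff_index_eq by blast
    ultimately show "Cs ! i \<inter> Cs ! j = {}" using scc sccs_disjoint by blast
  qed
  show "\<Union>(set Cs) = A"
    unfolding assms(3) by (rule Union_sccs)
  show "\<forall>i < length Cs. \<forall>j < i. \<forall>a \<in> Cs ! i. \<forall>b \<in> Cs ! j. \<not> regulates A Sa Trans a b"
  proof (intro allI impI ballI notI)
    fix i j a b
    assume "i < length Cs" "j < i" "a \<in> Cs ! i" "b \<in> Cs ! j" "regulates A Sa Trans a b"
    moreover from this have "j < length Cs" "i \<noteq> j" by simp_all
    ultimately have "i < j" using assms(4) by blast
    with \<open>j < i\<close> show False by simp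
  qed
qed

end
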